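(* Repeatedly choose independent uniformly random breaking points in $[0,1]$ (each new point further subdivides the current partition of $[0,1]$ into segments). Let $E$ be the event that after the first two breaks some three segments form a triangle (i.e. the three segments then present form a triangle), and after the third break no three of the four segments form a triangle. Then $\mathbb P[E] = \frac{3}{112}$.
   Context: Three lengths form a triangle iff each is less than the sum of the other two. *)

theory Defs
  imports "HOL-Probability.Probability"
begin

definition forms_triangle :: "real \<Rightarrow> real \<Rightarrow> real \<Rightarrow> bool" where
  "forms_triangle a b c \<longleftrightarrow> a < b + c \<and> b < a + c \<and> c < a + b"

definition seg_lengths :: "real list \<Rightarrow> real list" where
  "seg_lengths ps = (let s = sort (0 # ps @ [1]) in
      map (\<lambda>i. s ! (i + 1) - s ! i) [0..<length ps + 1])"

definition some_triangle :: "real list \<Rightarrow> bool" where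
  "some_triangle L \<longleftrightarrow> (\<exists>i j k. i < length L \<and> j < length L \<and> k < length L \<and>
      distinct [i, j, k] \<and> forms_triangle (L ! i) (L ! j) (L ! k))"

definition break_space :: "(nat \<Rightarrow> real) measure" where
  "break_space = PiM {..<3} (\<lambda>_. uniform_measure lborel {0..1})"

end

theory Submission
  imports Defs
begin

text \<open>If the first two breaks are at \<open>a \<le> b\<close>, the pieces \<open>a, b - a, 1 - b\<close> form a triangle
  iff each is shorter than \<open>1/2\<close>. The third break then falls into one piece, of length \<open>L\<close>
  say, the other two having lengths \<open>p, q\<close>, and cuts it into \<open>u\<close> and \<open>L - u\<close>. A case
  analysis over the four triples shows that no triangle remains iff
  \<open>m \<le> \<bar>2u - L\<bar> \<le> 2\<bar>p - q\<bar> - L\<close>, where \<open>m\<close> is the larger of those of \<open>p, q\<close> that are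
  shorter than \<open>L\<close> (and \<open>0\<close> if there is none). So these cuts form two symmetric intervals of
  total length \<open>max 0 (2\<bar>p - q\<bar> - L - m)\<close>. Integrated over the simplex of first-stage pieces,
  the three choices of the cut piece contribute \<open>1/224\<close> each, by the symmetries of the
  simplex, and the two orders of the first two breaks double the total to \<open>3/112\<close>.\<close>

section \<open>Triangles among segments\<close>

lemma forms_triangle_swap12: "forms_triangle a b c \<longleftrightarrow> forms_triangle b a c"
  unfolding forms_triangle_def by linarith

lemma forms_triangle_swap23: "forms_triangle a b c \<longleftrightarrow> forms_triangle a c b"
  unfolding forms_triangle_def by linarith

lemma forms_triangle_sum_one:
  "a + b + c = 1 \<Longrightarrow> forms_triangle a b c \<longleftrightarrow> a < 1/2 \<and> b < 1/2 \<and> c < 1/2"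
  unfolding forms_triangle_def by linarith

lemma some_triangle_iff_increasing:
  "some_triangle L \<longleftrightarrow> (\<exists>k<length L. \<exists>j<k. \<exists>i<j. forms_triangle (L!i) (L!j) (L!k))"
proof
  assume "some_triangle L"
  then obtain i j k where ijk: "i < length L" "j < length L" "k < length L" "distinct [i, j, k]"
    and tri: "forms_triangle (L!i) (L!j) (L!k)"
    unfolding some_triangle_def by blast
  have swapped: "forms_triangle (L!i) (L!k) (L!j)" "forms_triangle (L!j) (L!i) (L!k)"
    "forms_triangle (L!j) (L!k) (L!i)" "forms_triangle (L!k) (L!i) (L!j)" "forms_triangle (L!k) (L!j) (L!i)"
    using tri unfolding forms_triangle_def by linarith+
  from ijk(4) consider "i < j" "j < k" | "i < k" "k < j" | "j < i" "i < k"
    | "j < k" "k < i" | "k < i" "i < j" | "k < j" "j < i"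
    by (auto simp: neq_iff)
  then show "\<exists>k<length L. \<exists>j<k. \<exists>i<j. forms_triangle (L!i) (L!j) (L!k)"
    using ijk(1-3) tri swapped by cases blast+
next
  assume "\<exists>k<length L. \<exists>j<k. \<exists>i<j. forms_triangle (L!i) (L!j) (L!k)"
  then obtain i j k where "k < length L" "j < k" "i < j" "forms_triangle (L!i) (L!j) (L!k)"
    by blast
  then show "some_triangle L"
    unfolding some_triangle_def by (intro exI[of _ i] exI[of _ j] exI[of _ k]) auto
qed

lemma some_triangle_three: "some_triangle [a, b, c] \<longleftrightarrow> forms_triangle a b c"
  unfolding some_triangle_iff_increasing by (simp add: numeral_eq_Suc Ex_less_Suc)

lemma some_triangle_four:
  "some_triangle [a, b, c, d] \<longleftrightarrow>
     forms_triangle a b c \<or> forms_triangle a b d \<or> forms_triangle a c d \<or> forms_triangle b c d"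
  unfolding some_triangle_iff_increasing
  by (simp add: numeral_eq_Suc Ex_less_Suc) blast

lemma some_triangle_four_swap_pairs: "some_triangle [a, b, c, d] \<longleftrightarrow> some_triangle [c, d, a, b]"
  unfolding some_triangle_four using forms_triangle_swap12 forms_triangle_swap23 by metis

lemma some_triangle_four_move_last: "some_triangle [a, b, c, d] \<longleftrightarrow> some_triangle [a, d, b, c]"
  unfolding some_triangle_four using forms_triangle_swap12 forms_triangle_swap23 by metis

lemma seg_lengths_eq_map2:
  "seg_lengths ps = (let s = sort (0 # ps @ [1]) in map2 (-) (tl s) s)"
  unfolding seg_lengths_def Let_def
  by (intro nth_equalityI) (auto simp: nth_tl simp del: upt_Suc)

lemma seg_lengths_mset_cong:
  assumes "mset ps = mset qs"
  shows "seg_lengths ps = seg_lengths qs"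
proof -
  have "mset (0 # ps @ [1]) = mset (0 # qs @ [1::real])"
    using assms by simp
  then have "sort (0 # ps @ [1]) = sort (0 # qs @ [1])"
    by (metis mset_sort properties_for_sort sorted_sort)
  then show ?thesis unfolding seg_lengths_eq_map2 by simp
qed

lemma seg_lengths_sorted:
  assumes "sorted ps" "set ps \<subseteq> {0..1}"
  shows "seg_lengths ps = map2 (-) (ps @ [1]) (0 # ps)"
proof -
  have "sort (0 # ps @ [1]) = 0 # ps @ [1]"
    using assms by (intro sorted_sort_id) (auto simp: sorted_append)
  then show ?thesis
    unfolding seg_lengths_def Let_def
    by (intro nth_equalityI) (auto simp: nth_append nth_Cons' simp del: upt_Suc)
qed

lemma seg_lengths_two:
  "0 \<le> a \<Longrightarrow> a \<le> b \<Longrightarrow> b \<le> 1 \<Longrightarrow> seg_lengths [a, b] = [a, b - a, 1 - b]"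
  by (simp add: seg_lengths_sorted)

section \<open>Measurability\<close>

lemma sort_map_iff_rearrangement:
  fixes f :: "'a \<Rightarrow> 'b::linorder"
  shows "Q (sort (map f xs)) \<longleftrightarrow> (\<exists>ys\<in>{ys. mset ys = mset xs}. sorted (map f ys) \<and> Q (map f ys))"
proof -
  have sort_eq: "sort (map f xs) = map f ys" if "mset ys = mset xs" "sorted (map f ys)" for ys
    using that by (intro properties_for_sort) simp_all
  show ?thesis
  proof
    assume "Q (sort (map f xs))"
    then show "\<exists>ys\<in>{ys. mset ys = mset xs}. sorted (map f ys) \<and> Q (map f ys)"
      using sort_eq[of "sort_key f xs"] by (intro bexI[of _ "sort_key f xs"]) auto
  next
    assume "\<exists>ys\<in>{ys. mset ys = mset xs}. sorted (map f ys) \<and> Q (map f ys)"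
    then show "Q (sort (map f xs))" using sort_eq by auto
  qed
qed

lemma pred_sort_map:
  fixes fs :: "('a \<Rightarrow> real) list"
  assumes "\<And>gs. mset gs = mset fs \<Longrightarrow> Measurable.pred M (\<lambda>x. Q (map (\<lambda>g. g x) gs))"
    and "\<And>f. f \<in> set fs \<Longrightarrow> f \<in> borel_measurable M"
  shows "Measurable.pred M (\<lambda>x. Q (sort (map (\<lambda>f. f x) fs)))"
proof -
  let ?G = "{gs. mset gs = mset fs}"
  have "?G \<subseteq> {gs. set gs \<subseteq> set fs \<and> length gs = length fs}"
    using mset_eq_setD mset_eq_length by blast
  then have "finite ?G"
    using finite_lists_length_eq[of "set fs" "length fs"] finite_subset by blast
  moreover have "Measurable.pred M (\<lambda>x. sorted (map (\<lambda>g. g x) gs) \<and> Q (map (\<lambda>g. g x) gs))"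
    if "gs \<in> ?G" for gs
  proof -
    have "set gs = set fs" using mset_eq_setD that by blast
    then have gs_meas: "gs ! i \<in> borel_measurable M" if "i < length gs" for i
      using assms(2) nth_mem[OF that] by blast
    have sorted_iff: "sorted (map (\<lambda>g. g x) gs) \<longleftrightarrow>
        (\<forall>j\<in>{..<length gs}. \<forall>i\<in>{..<j}. (gs ! i) x \<le> (gs ! j) x)" for x
      by (auto simp: sorted_iff_nth_mono_less)
    have "Measurable.pred M (\<lambda>x. \<forall>j\<in>{..<length gs}. \<forall>i\<in>{..<j}. (gs ! i) x \<le> (gs ! j) x)"
    proof (intro pred_intros_finite)
      fix j i assume "j \<in> {..<length gs}" "i \<in> {..<j}"
      then have [measurable]: "gs ! i \<in> borel_measurable M" "gs ! j \<in> borel_measurable M"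
        using gs_meas by auto
      show "Measurable.pred M (\<lambda>x. (gs ! i) x \<le> (gs ! j) x)" by measurable
    qed auto
    moreover have "Measurable.pred M (\<lambda>x. Q (map (\<lambda>g. g x) gs))"
      using assms(1) that by blast
    ultimately show ?thesis
      unfolding sorted_iff by (rule pred_intros_logic(3))
  qed
  ultimately show ?thesis
    unfolding sort_map_iff_rearrangement[where Q = Q] by (intro pred_intros_finite(4))
qed

lemma pred_some_triangle_map:
  fixes ds :: "('a \<Rightarrow> real) list"
  assumes "\<And>d. d \<in> set ds \<Longrightarrow> d \<in> borel_measurable M"
  shows "Measurable.pred M (\<lambda>x. some_triangle (map (\<lambda>d. d x) ds))"
proof -
  have "some_triangle (map (\<lambda>d. d x) ds) \<longleftrightarrow> (\<exists>k\<in>{..<length ds}. \<exists>j\<in>{..<k}. \<exists>i\<in>{..<j}.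
          forms_triangle ((ds ! i) x) ((ds ! j) x) ((ds ! k) x))" for x
  proof
    assume "some_triangle (map (\<lambda>d. d x) ds)"
    then obtain k j i where "k < length ds" "j < k" "i < j"
      "forms_triangle (map (\<lambda>d. d x) ds ! i) (map (\<lambda>d. d x) ds ! j) (map (\<lambda>d. d x) ds ! k)"
      unfolding some_triangle_iff_increasing by auto
    then show "\<exists>k\<in>{..<length ds}. \<exists>j\<in>{..<k}. \<exists>i\<in>{..<j}.
          forms_triangle ((ds ! i) x) ((ds ! j) x) ((ds ! k) x)"
      by (intro bexI[of _ k] bexI[of _ j] bexI[of _ i]) auto
  next
    assume "\<exists>k\<in>{..<length ds}. \<exists>j\<in>{..<k}. \<exists>i\<in>{..<j}.
          forms_triangle ((ds ! i) x) ((ds ! j) x) ((ds ! k) x)"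
    then obtain k j i where "k < length ds" "j < k" "i < j"
      "forms_triangle ((ds ! i) x) ((ds ! j) x) ((ds ! k) x)"
      by auto
    then show "some_triangle (map (\<lambda>d. d x) ds)"
      unfolding some_triangle_iff_increasing
      by (intro exI[of _ k] conjI exI[of _ j] exI[of _ i]) auto
  qed
  moreover have "Measurable.pred M (\<lambda>x. \<exists>k\<in>{..<length ds}. \<exists>j\<in>{..<k}. \<exists>i\<in>{..<j}.
          forms_triangle ((ds ! i) x) ((ds ! j) x) ((ds ! k) x))"
  proof (intro pred_intros_finite)
    fix k j i assume "k \<in> {..<length ds}" "j \<in> {..<k}" "i \<in> {..<j}"
    then have [measurable]: "ds ! i \<in> borel_measurable M" "ds ! j \<in> borel_measurable M"
      "ds ! k \<in> borel_measurable M"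
      using assms by auto
    show "Measurable.pred M (\<lambda>x. forms_triangle ((ds ! i) x) ((ds ! j) x) ((ds ! k) x))"
      unfolding forms_triangle_def by measurable
  qed auto
  ultimately show ?thesis by simp
qed

lemma pred_some_triangle_seg_lengths:
  fixes fs :: "('a \<Rightarrow> real) list"
  assumes "\<And>f. f \<in> set fs \<Longrightarrow> f \<in> borel_measurable M"
  shows "Measurable.pred M (\<lambda>x. some_triangle (seg_lengths (map (\<lambda>f. f x) fs)))"
proof -
  let ?fs = "(\<lambda>_. 0) # fs @ [\<lambda>_. 1]"
  have "Measurable.pred M (\<lambda>x. (\<lambda>s. some_triangle (map2 (-) (tl s) s)) (sort (map (\<lambda>f. f x) ?fs)))"
  proof (rule pred_sort_map)
    fix gs :: "('a \<Rightarrow> real) list"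
    assume "mset gs = mset ?fs"
    then have gs: "g \<in> borel_measurable M" if "g \<in> set gs" for g
      using assms that mset_eq_setD by fastforce
    have diffs: "map2 (-) (tl (map (\<lambda>g. g x) gs)) (map (\<lambda>g. g x) gs) =
        map (\<lambda>d. d x) (map2 (\<lambda>g h x. g x - h x) (tl gs) gs)" for x
      by (simp add: map_tl[symmetric] zip_map_map comp_def split_def)
    have "d \<in> borel_measurable M" if d: "d \<in> set (map2 (\<lambda>g h x. g x - h x) (tl gs) gs)" for d
    proof -
      obtain g h where gh: "(g, h) \<in> set (zip (tl gs) gs)" "d = (\<lambda>x. g x - h x)"
        using d by auto
      have "set (tl gs) \<subseteq> set gs" by (cases gs) auto
      then have [measurable]: "g \<in> borel_measurable M" "h \<in> borel_measurable M"
        using set_zip_leftD[OF gh(1)] set_zip_rightD[OF gh(1)] gs by auto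
      show ?thesis unfolding gh(2) by measurable
    qed
    then have "Measurable.pred M (\<lambda>x. some_triangle (map (\<lambda>d. d x) (map2 (\<lambda>g h x. g x - h x) (tl gs) gs)))"
      by (rule pred_some_triangle_map)
    then show "Measurable.pred M (\<lambda>x. some_triangle (map2 (-) (tl (map (\<lambda>g. g x) gs)) (map (\<lambda>g. g x) gs)))"
      by (simp only: diffs)
  qed (use assms in auto)
  then show ?thesis by (simp add: seg_lengths_eq_map2 Let_def)
qed

section \<open>Cutting one piece\<close>

definition max_below :: "real \<Rightarrow> real \<Rightarrow> real \<Rightarrow> real" where
  "max_below L p q = (if L \<le> min p q then 0 else if L \<le> max p q then min p q else max p q)"

definition safe_cuts :: "real \<Rightarrow> real \<Rightarrow> real \<Rightarrow> real \<Rightarrow> real set" where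
  "safe_cuts lo hi p q = {t. max_below (hi - lo) p q \<le> \<bar>2 * t - (lo + hi)\<bar> \<and>
                             \<bar>2 * t - (lo + hi)\<bar> \<le> 2 * \<bar>p - q\<bar> - (hi - lo)}"

definition safe_cut_length :: "real \<Rightarrow> real \<Rightarrow> real \<Rightarrow> real" where
  "safe_cut_length L p q = max 0 (2 * \<bar>p - q\<bar> - L - max_below L p q)"

lemma no_triangle_after_cut:
  assumes "p < 1/2" "q < 1/2" "L < 1/2" "p + q + L = 1" "0 < u" "u < L"
  shows "\<not> some_triangle [p, q, u, L - u] \<longleftrightarrow>
           max_below L p q \<le> \<bar>2 * u - L\<bar> \<and> \<bar>2 * u - L\<bar> \<le> 2 * \<bar>p - q\<bar> - L"
  using assms unfolding some_triangle_four forms_triangle_def max_below_def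
  by (auto simp: abs_if min_def max_def split: if_splits)

lemma safe_cuts_iff:
  assumes "p < 1/2" "q < 1/2" "hi - lo < 1/2" "p + q + (hi - lo) = 1" "lo < t" "t < hi"
  shows "t \<in> safe_cuts lo hi p q \<longleftrightarrow> \<not> some_triangle [p, q, t - lo, hi - t]"
  using no_triangle_after_cut[of p q "hi - lo" "t - lo"] assms
  unfolding safe_cuts_def by (simp add: algebra_simps)

lemma safe_cuts_subset:
  assumes "p < 1/2" "q < 1/2" "hi - lo < 1/2" "p + q + (hi - lo) = 1"
  shows "safe_cuts lo hi p q \<subseteq> {lo<..<hi}"
  using assms unfolding safe_cuts_def by (auto simp: abs_if split: if_splits)

lemma emeasure_lborel_annulus:
  fixes c d m :: real
  assumes "0 \<le> m"
  shows "emeasure lborel {t. m \<le> \<bar>2 * t - c\<bar> \<and> \<bar>2 * t - c\<bar> \<le> d} = ennreal (max 0 (d - m))"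
proof (cases "m \<le> d")
  case True
  let ?A = "{(c - d) / 2..(c - m) / 2}" and ?B = "{(c + m) / 2<..(c + d) / 2}"
  have "AE t in lborel. m \<le> \<bar>2 * t - c\<bar> \<and> \<bar>2 * t - c\<bar> \<le> d \<longleftrightarrow> t \<in> ?A \<union> ?B"
    using AE_lborel_singleton[of "(c + m) / 2"] by eventually_elim (use assms in \<open>auto simp: abs_if field_simps\<close>)
  then have "emeasure lborel {t. m \<le> \<bar>2 * t - c\<bar> \<and> \<bar>2 * t - c\<bar> \<le> d} = emeasure lborel (?A \<union> ?B)"
    by (intro emeasure_eq_AE) auto
  also have "\<dots> = emeasure lborel ?A + emeasure lborel ?B"
    using assms by (intro plus_emeasure[symmetric]) auto
  also have "\<dots> = ennreal ((c - m) / 2 - (c - d) / 2) + ennreal ((c + d) / 2 - (c + m) / 2)"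
    using True by simp
  also have "\<dots> = ennreal ((c - m) / 2 - (c - d) / 2 + ((c + d) / 2 - (c + m) / 2))"
    using True by (intro ennreal_plus[symmetric]) (auto simp: field_simps)
  also have "\<dots> = ennreal (max 0 (d - m))"
    using True by (simp add: field_simps)
  finally show ?thesis .
next
  case False
  then have empty: "{t. m \<le> \<bar>2 * t - c\<bar> \<and> \<bar>2 * t - c\<bar> \<le> d} = {}" by auto
  show ?thesis unfolding empty using False by simp
qed

lemma emeasure_safe_cuts:
  "0 \<le> p \<Longrightarrow> 0 \<le> q \<Longrightarrow> emeasure lborel (safe_cuts lo hi p q) = ennreal (safe_cut_length (hi - lo) p q)"
  unfolding safe_cuts_def safe_cut_length_def
  by (subst emeasure_lborel_annulus) (auto simp: max_below_def algebra_simps)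

lemma safe_cuts_sets [measurable]: "safe_cuts lo hi p q \<in> sets lborel"
  unfolding safe_cuts_def by measurable

section \<open>The third break\<close>

definition triangle_then_none :: "real \<Rightarrow> real \<Rightarrow> real \<Rightarrow> bool" where
  "triangle_then_none y0 y1 y2 \<longleftrightarrow>
     some_triangle (seg_lengths [y0, y1]) \<and> \<not> some_triangle (seg_lengths [y0, y1, y2])"

lemma triangle_then_none_swap: "triangle_then_none y0 y1 y2 \<longleftrightarrow> triangle_then_none y1 y0 y2"
proof -
  have "seg_lengths [y1, y0] = seg_lengths [y0, y1]"
    "seg_lengths [y1, y0, y2] = seg_lengths [y0, y1, y2]"
    by (rule seg_lengths_mset_cong, simp add: add_mset_commute)+
  then show ?thesis unfolding triangle_then_none_def by simp
qed

lemma pred_triangle_then_none [measurable]: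
  assumes "f0 \<in> borel_measurable M" "f1 \<in> borel_measurable M" "f2 \<in> borel_measurable M"
  shows "Measurable.pred M (\<lambda>x. triangle_then_none (f0 x) (f1 x) (f2 x))"
proof -
  have "Measurable.pred M (\<lambda>x. some_triangle (seg_lengths (map (\<lambda>f. f x) [f0, f1])))"
    "Measurable.pred M (\<lambda>x. some_triangle (seg_lengths (map (\<lambda>f. f x) [f0, f1, f2])))"
    using pred_some_triangle_seg_lengths[of "[f0, f1]" M] pred_some_triangle_seg_lengths[of "[f0, f1, f2]" M]
      assms by auto
  then show ?thesis unfolding triangle_then_none_def by simp
qed

lemma safe_cuts_in_pieces:
  assumes "forms_triangle y0 (y1 - y0) (1 - y1)"
  shows "safe_cuts 0 y0 (y1 - y0) (1 - y1) \<subseteq> {0<..<y0}"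
    and "safe_cuts y0 y1 y0 (1 - y1) \<subseteq> {y0<..<y1}"
    and "safe_cuts y1 1 y0 (y1 - y0) \<subseteq> {y1<..<1}"
  using assms forms_triangle_sum_one[of y0 "y1 - y0" "1 - y1"]
    safe_cuts_subset[of "y1 - y0" "1 - y1" y0 0] safe_cuts_subset[of y0 "1 - y1" y1 y0]
    safe_cuts_subset[of y0 "y1 - y0" 1 y1]
  by simp_all

lemma triangle_then_none_iff_safe_cut:
  assumes "0 \<le> y0" "y0 < y1" "y1 \<le> 1" "forms_triangle y0 (y1 - y0) (1 - y1)" "y2 \<notin> {0, y0, y1, 1}"
  shows "y2 \<in> {0..1} \<and> triangle_then_none y0 y1 y2 \<longleftrightarrow>
           y2 \<in> safe_cuts 0 y0 (y1 - y0) (1 - y1) \<union> safe_cuts y0 y1 y0 (1 - y1) \<union>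
                safe_cuts y1 1 y0 (y1 - y0)"
proof -
  have small: "y0 < 1/2" "y1 - y0 < 1/2" "1 - y1 < 1/2"
    using assms(4) forms_triangle_sum_one[of y0 "y1 - y0" "1 - y1"] by simp_all
  have first: "some_triangle (seg_lengths [y0, y1])"
    using assms by (simp add: seg_lengths_two some_triangle_three)
  note left = safe_cuts_in_pieces(1)[OF assms(4)]
    and mid = safe_cuts_in_pieces(2)[OF assms(4)]
    and right = safe_cuts_in_pieces(3)[OF assms(4)]
  consider "y2 < 0" | "0 < y2" "y2 < y0" | "y0 < y2" "y2 < y1" | "y1 < y2" "y2 < 1" | "1 < y2"
    using assms(5) by fastforce
  then show ?thesis
  proof cases
    case 2
    have "seg_lengths [y0, y1, y2] = seg_lengths [y2, y0, y1]"
      by (rule seg_lengths_mset_cong) (simp add: add_mset_commute)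
    also have "\<dots> = [y2, y0 - y2, y1 - y0, 1 - y1]"
      using assms 2 by (simp add: seg_lengths_sorted)
    finally have "triangle_then_none y0 y1 y2 \<longleftrightarrow> y2 \<in> safe_cuts 0 y0 (y1 - y0) (1 - y1)"
      using first safe_cuts_iff[of "y1 - y0" "1 - y1" y0 0 y2] small 2
        some_triangle_four_swap_pairs[of y2 "y0 - y2" "y1 - y0" "1 - y1"]
      by (simp add: triangle_then_none_def)
    then show ?thesis using 2 mid right assms by auto
  next
    case 3
    have "seg_lengths [y0, y1, y2] = seg_lengths [y0, y2, y1]"
      by (rule seg_lengths_mset_cong) (simp add: add_mset_commute)
    also have "\<dots> = [y0, y2 - y0, y1 - y2, 1 - y1]"
      using assms 3 by (simp add: seg_lengths_sorted)
    finally have "triangle_then_none y0 y1 y2 \<longleftrightarrow> y2 \<in> safe_cuts y0 y1 y0 (1 - y1)"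
      using first safe_cuts_iff[of y0 "1 - y1" y1 y0 y2] small 3
        some_triangle_four_move_last[of y0 "y2 - y0" "y1 - y2" "1 - y1"]
      by (simp add: triangle_then_none_def)
    then show ?thesis using 3 left right assms by auto
  next
    case 4
    then have "seg_lengths [y0, y1, y2] = [y0, y1 - y0, y2 - y1, 1 - y2]"
      using assms by (simp add: seg_lengths_sorted)
    then have "triangle_then_none y0 y1 y2 \<longleftrightarrow> y2 \<in> safe_cuts y1 1 y0 (y1 - y0)"
      using first safe_cuts_iff[of y0 "y1 - y0" 1 y1 y2] small 4
      by (simp add: triangle_then_none_def)
    then show ?thesis using 4 left mid assms by auto
  qed (use left mid right assms in auto)
qed

definition safe_cut_measure :: "real \<Rightarrow> real \<Rightarrow> real \<Rightarrow> ennreal" where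
  "safe_cut_measure L p q = ennreal (if forms_triangle L p q then safe_cut_length L p q else 0)"

text \<open>The measure of third breaks leaving no triangle, when the first two breaks leave the
  pieces \<open>a, b, 1 - a - b\<close> from left to right.\<close>
definition no_triangle_measure :: "real \<Rightarrow> real \<Rightarrow> ennreal" where
  "no_triangle_measure a b = safe_cut_measure a b (1 - a - b) + safe_cut_measure b a (1 - a - b)
     + safe_cut_measure (1 - a - b) a b"

lemma borel_measurable_safe_cut_measure [measurable]:
  assumes [measurable]: "L \<in> borel_measurable M" "p \<in> borel_measurable M" "q \<in> borel_measurable M"
  shows "(\<lambda>x. safe_cut_measure (L x) (p x) (q x)) \<in> borel_measurable M"
  unfolding safe_cut_measure_def safe_cut_length_def max_below_def forms_triangle_def by measurable

lemma borel_measurable_no_triangle_measure [measurable]: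
  assumes [measurable]: "a \<in> borel_measurable M" "b \<in> borel_measurable M"
  shows "(\<lambda>x. no_triangle_measure (a x) (b x)) \<in> borel_measurable M"
  unfolding no_triangle_measure_def by measurable

lemma no_triangle_measure_eq_0:
  "\<not> (0 < a \<and> 0 < b \<and> a + b < 1) \<Longrightarrow> no_triangle_measure a b = 0"
  unfolding no_triangle_measure_def safe_cut_measure_def forms_triangle_def by auto

lemma emeasure_third_break:
  assumes "0 \<le> y0" "y0 < y1" "y1 \<le> 1" "forms_triangle y0 (y1 - y0) (1 - y1)"
  shows "emeasure lborel {y2 \<in> {0..1}. triangle_then_none y0 y1 y2} = no_triangle_measure y0 (y1 - y0)"
proof -
  let ?A1 = "safe_cuts 0 y0 (y1 - y0) (1 - y1)" and ?A2 = "safe_cuts y0 y1 y0 (1 - y1)"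
    and ?A3 = "safe_cuts y1 1 y0 (y1 - y0)"
  have "AE y2 in lborel. y2 \<notin> {0, y0, y1, 1}"
    by (simp add: AE_lborel_singleton)
  have "emeasure lborel {y2 \<in> {0..1}. triangle_then_none y0 y1 y2} = emeasure lborel (?A1 \<union> ?A2 \<union> ?A3)"
  proof (rule emeasure_eq_AE)
    show "AE y2 in lborel. y2 \<in> {y2 \<in> {0..1}. triangle_then_none y0 y1 y2} \<longleftrightarrow>
        y2 \<in> ?A1 \<union> ?A2 \<union> ?A3"
      using \<open>AE y2 in lborel. y2 \<notin> {0, y0, y1, 1}\<close>
      by eventually_elim (use triangle_then_none_iff_safe_cut[OF assms] in blast)
  qed measurable
  also have "\<dots> = emeasure lborel ?A1 + emeasure lborel ?A2 + emeasure lborel ?A3"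
  proof -
    have "?A1 \<inter> ?A2 = {}" "(?A1 \<union> ?A2) \<inter> ?A3 = {}"
      using safe_cuts_in_pieces[OF assms(4)] assms(2) by (fastforce simp: subset_iff)+
    then show ?thesis
      by (simp add: plus_emeasure[symmetric] safe_cuts_sets del: sets_lborel)
  qed
  also have "\<dots> = no_triangle_measure y0 (y1 - y0)"
    using assms forms_triangle_swap12 forms_triangle_swap23
    by (simp add: emeasure_safe_cuts no_triangle_measure_def safe_cut_measure_def)
  finally show ?thesis .
qed

lemma nn_integral_third_break:
  assumes "0 \<le> y0" "y0 < y1" "y1 \<le> 1"
  shows "(\<integral>\<^sup>+y2\<in>{0..1}. of_bool (triangle_then_none y0 y1 y2) \<partial>lborel) = no_triangle_measure y0 (y1 - y0)"
proof -
  have "(\<integral>\<^sup>+y2\<in>{0..1}. of_bool (triangle_then_none y0 y1 y2) \<partial>lborel) =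
      (\<integral>\<^sup>+y2. indicator {y2 \<in> {0..1}. triangle_then_none y0 y1 y2} y2 \<partial>lborel)"
    by (intro nn_integral_cong) (auto simp: indicator_def)
  also have "\<dots> = emeasure lborel {y2 \<in> {0..1}. triangle_then_none y0 y1 y2}"
    by (rule nn_integral_indicator) measurable
  also have "\<dots> = no_triangle_measure y0 (y1 - y0)"
  proof (cases "forms_triangle y0 (y1 - y0) (1 - y1)")
    case False
    then have "\<not> triangle_then_none y0 y1 y2" for y2
      using assms by (simp add: triangle_then_none_def seg_lengths_two some_triangle_three)
    moreover have "no_triangle_measure y0 (y1 - y0) = 0"
      using False unfolding no_triangle_measure_def safe_cut_measure_def forms_triangle_def by auto
    ultimately show ?thesis by simp
  qed (use assms emeasure_third_break in blast)
  finally show ?thesis .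
qed

section \<open>Integration\<close>

lemma nn_integral_lborel_swap:
  fixes f :: "real \<Rightarrow> real \<Rightarrow> ennreal"
  assumes "(\<lambda>(x, y). f x y) \<in> borel_measurable (lborel \<Otimes>\<^sub>M lborel)"
  shows "(\<integral>\<^sup>+x. \<integral>\<^sup>+y. f x y \<partial>lborel \<partial>lborel) = (\<integral>\<^sup>+y. \<integral>\<^sup>+x. f x y \<partial>lborel \<partial>lborel)"
  using lborel_pair.Fubini'[OF assms] by simp

lemma nn_integral_lborel_symmetric:
  fixes f :: "real \<Rightarrow> real \<Rightarrow> ennreal"
  assumes [measurable]: "(\<lambda>(x, y). f x y) \<in> borel_measurable (lborel \<Otimes>\<^sub>M lborel)"
    and sym: "\<And>x y. f x y = f y x"
  shows "(\<integral>\<^sup>+x. \<integral>\<^sup>+y. f x y \<partial>lborel \<partial>lborel) =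
           2 * (\<integral>\<^sup>+x. \<integral>\<^sup>+y. (if x < y then f x y else 0) \<partial>lborel \<partial>lborel)"
proof -
  have below: "(\<integral>\<^sup>+x. \<integral>\<^sup>+y. (if y < x then f x y else 0) \<partial>lborel \<partial>lborel) =
      (\<integral>\<^sup>+x. \<integral>\<^sup>+y. (if x < y then f x y else 0) \<partial>lborel \<partial>lborel)"
  proof -
    have "(\<integral>\<^sup>+x. \<integral>\<^sup>+y. (if y < x then f x y else 0) \<partial>lborel \<partial>lborel) =
        (\<integral>\<^sup>+y. \<integral>\<^sup>+x. (if y < x then f x y else 0) \<partial>lborel \<partial>lborel)"
      by (rule nn_integral_lborel_swap) measurable
    also have "\<dots> = (\<integral>\<^sup>+x. \<integral>\<^sup>+y. (if x < y then f x y else 0) \<partial>lborel \<partial>lborel)"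
      by (intro nn_integral_cong) (simp add: sym)
    finally show ?thesis .
  qed
  have split: "(\<integral>\<^sup>+y. f x y \<partial>lborel) =
      (\<integral>\<^sup>+y. (if y < x then f x y else 0) \<partial>lborel) + (\<integral>\<^sup>+y. (if x < y then f x y else 0) \<partial>lborel)" for x
  proof -
    have "(\<integral>\<^sup>+y. f x y \<partial>lborel) = (\<integral>\<^sup>+y. (if y < x then f x y else 0) + (if x < y then f x y else 0) \<partial>lborel)"
      using AE_lborel_singleton[of x] by (intro nn_integral_cong_AE) (auto elim!: eventually_mono)
    also have "\<dots> = (\<integral>\<^sup>+y. (if y < x then f x y else 0) \<partial>lborel) + (\<integral>\<^sup>+y. (if x < y then f x y else 0) \<partial>lborel)"
      by (rule nn_integral_add) measurable
    finally show ?thesis .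
  qed
  have "(\<integral>\<^sup>+x. \<integral>\<^sup>+y. f x y \<partial>lborel \<partial>lborel) =
      (\<integral>\<^sup>+x. \<integral>\<^sup>+y. (if y < x then f x y else 0) \<partial>lborel \<partial>lborel) +
      (\<integral>\<^sup>+x. \<integral>\<^sup>+y. (if x < y then f x y else 0) \<partial>lborel \<partial>lborel)"
    unfolding split by (rule nn_integral_add) measurable
  then show ?thesis
    unfolding below by (simp add: mult_2)
qed

lemma nn_integral_unit_square_symmetric:
  fixes E g :: "real \<Rightarrow> real \<Rightarrow> ennreal"
  assumes [measurable]: "(\<lambda>(x, y). E x y) \<in> borel_measurable (lborel \<Otimes>\<^sub>M lborel)"
    and [measurable]: "(\<lambda>(a, b). g a b) \<in> borel_measurable (lborel \<Otimes>\<^sub>M lborel)"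
    and sym: "\<And>x y. E x y = E y x"
    and ordered: "\<And>x y. 0 \<le> x \<Longrightarrow> x < y \<Longrightarrow> y \<le> 1 \<Longrightarrow> E x y = g x (y - x)"
    and support: "\<And>a b. g a b \<noteq> 0 \<Longrightarrow> 0 \<le> a \<and> 0 < b \<and> a + b \<le> 1"
  shows "(\<integral>\<^sup>+x\<in>{0..1}. \<integral>\<^sup>+y\<in>{0..1}. E x y \<partial>lborel \<partial>lborel) = 2 * (\<integral>\<^sup>+a. \<integral>\<^sup>+b. g a b \<partial>lborel \<partial>lborel)"
proof -
  let ?F = "\<lambda>x y. E x y * indicator {0..1} x * indicator {0..1} y"
  have "(\<integral>\<^sup>+x\<in>{0..1}. \<integral>\<^sup>+y\<in>{0..1}. E x y \<partial>lborel \<partial>lborel) = (\<integral>\<^sup>+x. \<integral>\<^sup>+y. ?F x y \<partial>lborel \<partial>lborel)"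
  proof (intro nn_integral_cong)
    fix x :: real
    have "(\<integral>\<^sup>+y. ?F x y \<partial>lborel) = (\<integral>\<^sup>+y. indicator {0..1} x * (E x y * indicator {0..1} y) \<partial>lborel)"
      by (simp add: mult_ac)
    also have "\<dots> = indicator {0..1} x * (\<integral>\<^sup>+y\<in>{0..1}. E x y \<partial>lborel)"
      by (rule nn_integral_cmult) measurable
    finally show "(\<integral>\<^sup>+y\<in>{0..1}. E x y \<partial>lborel) * indicator {0..1} x = (\<integral>\<^sup>+y. ?F x y \<partial>lborel)"
      by (simp add: mult_ac)
  qed
  also have "\<dots> = 2 * (\<integral>\<^sup>+x. \<integral>\<^sup>+y. (if x < y then ?F x y else 0) \<partial>lborel \<partial>lborel)"
    by (rule nn_integral_lborel_symmetric) (measurable, simp add: sym mult_ac)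
  also have "(\<integral>\<^sup>+x. \<integral>\<^sup>+y. (if x < y then ?F x y else 0) \<partial>lborel \<partial>lborel) =
      (\<integral>\<^sup>+x. \<integral>\<^sup>+y. g x (y - x) \<partial>lborel \<partial>lborel)"
  proof (intro nn_integral_cong)
    fix x y :: real
    show "(if x < y then ?F x y else 0) = g x (y - x)"
      using ordered[of x y] support[of x "y - x"]
      by (cases "g x (y - x) = 0") (auto simp: indicator_def)
  qed
  also have "\<dots> = (\<integral>\<^sup>+a. \<integral>\<^sup>+b. g a b \<partial>lborel \<partial>lborel)"
  proof (rule nn_integral_cong)
    fix x :: real
    show "(\<integral>\<^sup>+y. g x (y - x) \<partial>lborel) = (\<integral>\<^sup>+b. g x b \<partial>lborel)"
      using nn_integral_real_affine[of "\<lambda>y. g x (y - x)" 1 x] by simp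
  qed
  finally show ?thesis .
qed

lemma nn_integral_ramp:
  fixes c k lo :: real
  assumes "0 < k"
  shows "(\<integral>\<^sup>+b\<in>{lo..}. ennreal (max 0 (c - k * b)) \<partial>lborel) = ennreal ((max 0 (c - k * lo))\<^sup>2 / (2 * k))"
proof (cases "k * lo < c")
  case True
  have "(\<integral>\<^sup>+b\<in>{lo..}. ennreal (max 0 (c - k * b)) \<partial>lborel) =
      (\<integral>\<^sup>+b. ennreal (c - k * b) * indicator {lo..c / k} b \<partial>lborel)"
    using assms by (intro nn_integral_cong) (auto simp: indicator_def field_simps max_def)
  also have "\<dots> = ennreal ((c * (c / k) - k * (c / k)\<^sup>2 / 2) - (c * lo - k * lo\<^sup>2 / 2))"
    using assms True
    by (intro nn_integral_FTC_Icc[where F="\<lambda>b. c * b - k * b\<^sup>2 / 2"])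
       (auto intro!: derivative_eq_intros simp: field_simps)
  also have "\<dots> = ennreal ((max 0 (c - k * lo))\<^sup>2 / (2 * k))"
    using assms True by (simp add: field_simps power2_eq_square)
  finally show ?thesis .
next
  case False
  have zero: "ennreal (max 0 (c - k * b)) * indicator {lo..} b = 0" for b
  proof (cases "lo \<le> b")
    case True
    then have "c - k * b \<le> 0" using False assms mult_left_mono[of lo b k] by linarith
    then show ?thesis by simp
  qed simp
  have "(\<integral>\<^sup>+b\<in>{lo..}. ennreal (max 0 (c - k * b)) \<partial>lborel) = 0"
    by (simp only: zero) simp
  then show ?thesis using False by simp
qed

lemma safe_cut_measure_swap: "safe_cut_measure L p q = safe_cut_measure L q p"
  unfolding safe_cut_measure_def safe_cut_length_def max_below_def
  by (simp add: forms_triangle_swap23[of L] abs_minus_commute min.commute max.commute)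

text \<open>With \<open>b < a\<close>, the first ramp is the case \<open>1 - a - b \<le> b\<close> and the second the case
  \<open>b < 1 - a - b \<le> a\<close>; if the cut piece is the longest, no cut avoids a triangle.\<close>
lemma safe_cut_measure_last_below:
  "(if b < a then safe_cut_measure (1 - a - b) a b else 0) =
     (if a < 1/2 then ennreal (max 0 (3 * a - 1 - b)) * indicator {(1 - a) / 2..} b
        + ennreal (max 0 (3 * a - 1 - 2 * b)) * indicator {1 - 2 * a..} b else 0)"
  unfolding safe_cut_measure_def safe_cut_length_def max_below_def forms_triangle_def
  by (auto simp: indicator_def max_def min_def abs_if field_simps)

lemma nn_integral_safe_cut_measure_last_below:
  "(\<integral>\<^sup>+b. (if b < a then safe_cut_measure (1 - a - b) a b else 0) \<partial>lborel) =
     ennreal (3 * (max 0 (7 * a - 3))\<^sup>2 / 8) * indicator {..<1/2} a"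
proof (cases "a < 1/2")
  case True
  have "(\<integral>\<^sup>+b. (if b < a then safe_cut_measure (1 - a - b) a b else 0) \<partial>lborel) =
      (\<integral>\<^sup>+b\<in>{(1 - a) / 2..}. ennreal (max 0 ((3 * a - 1) - 1 * b)) \<partial>lborel) +
      (\<integral>\<^sup>+b\<in>{1 - 2 * a..}. ennreal (max 0 ((3 * a - 1) - 2 * b)) \<partial>lborel)"
    using True by (simp only: safe_cut_measure_last_below if_True) (simp add: nn_integral_add)
  also have "\<dots> = ennreal ((max 0 ((3 * a - 1) - 1 * ((1 - a) / 2)))\<^sup>2 / (2 * 1)) +
      ennreal ((max 0 ((3 * a - 1) - 2 * (1 - 2 * a)))\<^sup>2 / (2 * 2))"
    by (simp only: nn_integral_ramp zero_less_one zero_less_numeral)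
  also have "\<dots> = ennreal ((max 0 (7 * a - 3))\<^sup>2 / 8) + ennreal ((max 0 (7 * a - 3))\<^sup>2 / 4)"
    by (cases "7 * a \<le> 3") (simp_all add: max_def field_simps power2_eq_square)
  also have "\<dots> = ennreal (3 * (max 0 (7 * a - 3))\<^sup>2 / 8)"
    by (subst ennreal_plus[symmetric]) (simp_all add: field_simps)
  finally show ?thesis using True by simp
qed (simp add: safe_cut_measure_last_below)

lemma nn_integral_safe_cut_measure_last:
  "(\<integral>\<^sup>+a. \<integral>\<^sup>+b. safe_cut_measure (1 - a - b) a b \<partial>lborel \<partial>lborel) = ennreal (1 / 224)"
proof -
  let ?f = "\<lambda>a b. safe_cut_measure (1 - a - b) a b"
  have "(\<integral>\<^sup>+a. \<integral>\<^sup>+b. ?f a b \<partial>lborel \<partial>lborel) =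
      2 * (\<integral>\<^sup>+a. \<integral>\<^sup>+b. (if a < b then ?f a b else 0) \<partial>lborel \<partial>lborel)"
    by (rule nn_integral_lborel_symmetric) (measurable, simp add: safe_cut_measure_swap algebra_simps)
  also have "(\<integral>\<^sup>+a. \<integral>\<^sup>+b. (if a < b then ?f a b else 0) \<partial>lborel \<partial>lborel) =
      (\<integral>\<^sup>+b. \<integral>\<^sup>+a. (if a < b then ?f a b else 0) \<partial>lborel \<partial>lborel)"
    by (rule nn_integral_lborel_swap) measurable
  also have "\<dots> = (\<integral>\<^sup>+a. \<integral>\<^sup>+b. (if b < a then ?f a b else 0) \<partial>lborel \<partial>lborel)"
    by (intro nn_integral_cong) (simp add: safe_cut_measure_swap algebra_simps)
  also have "\<dots> = (\<integral>\<^sup>+a. ennreal (3 * (max 0 (7 * a - 3))\<^sup>2 / 8) * indicator {..<1/2} a \<partial>lborel)"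
    by (simp only: nn_integral_safe_cut_measure_last_below)
  also have "\<dots> = (\<integral>\<^sup>+a. ennreal (3 * (7 * a - 3)\<^sup>2 / 8) * indicator {3/7..1/2} a \<partial>lborel)"
    using AE_lborel_singleton[of "1/2"]
    by (intro nn_integral_cong_AE) (auto elim!: eventually_mono simp: indicator_def max_def)
  also have "\<dots> = ennreal ((7 * (1/2) - 3) ^ 3 / 56 - (7 * (3/7) - 3) ^ 3 / 56)"
  proof (rule nn_integral_FTC_Icc)
    show "((\<lambda>a. (7 * a - 3) ^ 3 / 56) has_real_derivative 3 * (7 * x - 3)\<^sup>2 / 8) (at x)" for x :: real
      by (auto intro!: derivative_eq_intros simp: field_simps eval_nat_numeral)
  qed auto
  finally show ?thesis
    using ennreal_mult[of 2 "1 / 448"] by (simp add: eval_nat_numeral)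
qed

text \<open>The swap \<open>(a, b) \<mapsto> (b, a)\<close> and, for fixed \<open>a\<close>, the reflection \<open>b \<mapsto> 1 - a - b\<close>
  permute the three pieces.\<close>
lemma nn_integral_no_triangle_measure:
  "(\<integral>\<^sup>+a. \<integral>\<^sup>+b. no_triangle_measure a b \<partial>lborel \<partial>lborel) = ennreal (3 / 224)"
proof -
  have [measurable]: "(\<lambda>b. safe_cut_measure a b (1 - a - b)) \<in> borel_measurable lborel"
    "(\<lambda>b. safe_cut_measure b a (1 - a - b)) \<in> borel_measurable lborel"
    "(\<lambda>b. safe_cut_measure (1 - a - b) a b) \<in> borel_measurable lborel" for a
    by measurable
  have swap: "(\<integral>\<^sup>+a. \<integral>\<^sup>+b. safe_cut_measure a b (1 - a - b) \<partial>lborel \<partial>lborel) =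
      (\<integral>\<^sup>+a. \<integral>\<^sup>+b. safe_cut_measure b a (1 - a - b) \<partial>lborel \<partial>lborel)"
  proof -
    have "(\<integral>\<^sup>+a. \<integral>\<^sup>+b. safe_cut_measure a b (1 - a - b) \<partial>lborel \<partial>lborel) =
        (\<integral>\<^sup>+b. \<integral>\<^sup>+a. safe_cut_measure a b (1 - a - b) \<partial>lborel \<partial>lborel)"
      by (rule nn_integral_lborel_swap) measurable
    then show ?thesis by (simp add: algebra_simps)
  qed
  have reflect: "(\<integral>\<^sup>+b. safe_cut_measure b a (1 - a - b) \<partial>lborel) =
      (\<integral>\<^sup>+b. safe_cut_measure (1 - a - b) a b \<partial>lborel)" for a
    using nn_integral_real_affine[of "\<lambda>b. safe_cut_measure b a (1 - a - b)" "-1" "1 - a"] by simp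
  have "(\<integral>\<^sup>+a. \<integral>\<^sup>+b. no_triangle_measure a b \<partial>lborel \<partial>lborel) =
      (\<integral>\<^sup>+a. \<integral>\<^sup>+b. safe_cut_measure a b (1 - a - b) \<partial>lborel \<partial>lborel) +
      (\<integral>\<^sup>+a. \<integral>\<^sup>+b. safe_cut_measure b a (1 - a - b) \<partial>lborel \<partial>lborel) +
      (\<integral>\<^sup>+a. \<integral>\<^sup>+b. safe_cut_measure (1 - a - b) a b \<partial>lborel \<partial>lborel)"
    unfolding no_triangle_measure_def by (simp add: nn_integral_add)
  also have "\<dots> = ennreal (1 / 224) + ennreal (1 / 224) + ennreal (1 / 224)"
    unfolding swap reflect nn_integral_safe_cut_measure_last ..
  also have "\<dots> = ennreal (3 / 224)"
    by (simp flip: ennreal_plus)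
  finally show ?thesis .
qed

lemma nn_integral_break_space:
  fixes f :: "real \<Rightarrow> real \<Rightarrow> real \<Rightarrow> ennreal"
  assumes f: "(\<lambda>(x, y, z). f x y z) \<in> borel_measurable (lborel \<Otimes>\<^sub>M lborel \<Otimes>\<^sub>M lborel)"
  shows "(\<integral>\<^sup>+x. f (x 0) (x 1) (x 2) \<partial>break_space) =
           (\<integral>\<^sup>+x\<in>{0..1}. \<integral>\<^sup>+y\<in>{0..1}. \<integral>\<^sup>+z\<in>{0..1}. f x y z \<partial>lborel \<partial>lborel \<partial>lborel)"
proof -
  let ?U = "uniform_measure lborel {0..1::real}"
  interpret U: prob_space ?U
    by (rule prob_space_uniform_measure) auto
  interpret product_sigma_finite "\<lambda>_::nat. ?U"
    unfolding product_sigma_finite_def by (simp add: U.sigma_finite_measure_axioms)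
  have uniform: "(\<integral>\<^sup>+x. h x \<partial>?U) = (\<integral>\<^sup>+x\<in>{0..1}. h x \<partial>lborel)" if "h \<in> borel_measurable lborel" for h
    using that by (simp add: nn_integral_uniform_measure divide_ennreal_def)
  have m0: "(\<lambda>\<omega>. f (\<omega> 0) (\<omega> 1) (\<omega> 2)) \<in> borel_measurable (Pi\<^sub>M (insert 0 (insert 1 {2::nat})) (\<lambda>_. ?U))"
    using measurable_compose[OF _ f, of "\<lambda>\<omega>::nat \<Rightarrow> real. (\<omega> 0, \<omega> 1, \<omega> 2)"] by simp measurable
  have m1: "(\<lambda>\<omega>. f x (\<omega> 1) (\<omega> 2)) \<in> borel_measurable (Pi\<^sub>M (insert 1 {2::nat}) (\<lambda>_. ?U))" for x
    using measurable_compose[OF _ f, of "\<lambda>\<omega>::nat \<Rightarrow> real. (x, \<omega> 1, \<omega> 2)"] by simp measurable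
  have m2: "f x y \<in> borel_measurable ?U" for x y
    using measurable_compose[OF _ f, of "\<lambda>z. (x, y, z)"] by simp measurable
  have "{..<3::nat} = insert 0 (insert 1 {2})" by auto
  then have "(\<integral>\<^sup>+x. f (x 0) (x 1) (x 2) \<partial>break_space) =
      (\<integral>\<^sup>+x. f (x 0) (x 1) (x 2) \<partial>Pi\<^sub>M (insert 0 (insert 1 {2::nat})) (\<lambda>_. ?U))"
    unfolding break_space_def by simp
  also have "\<dots> = (\<integral>\<^sup>+x. \<integral>\<^sup>+\<omega>. f x (\<omega> 1) (\<omega> 2) \<partial>Pi\<^sub>M (insert 1 {2::nat}) (\<lambda>_. ?U) \<partial>?U)"
    using product_nn_integral_insert_rev[OF _ _ m0] by simp
  also have "\<dots> = (\<integral>\<^sup>+x. \<integral>\<^sup>+y. \<integral>\<^sup>+\<omega>. f x y (\<omega> 2) \<partial>Pi\<^sub>M {2::nat} (\<lambda>_. ?U) \<partial>?U \<partial>?U)"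
    using product_nn_integral_insert_rev[OF _ _ m1] by simp
  also have "\<dots> = (\<integral>\<^sup>+x. \<integral>\<^sup>+y. \<integral>\<^sup>+z. f x y z \<partial>?U \<partial>?U \<partial>?U)"
    using product_nn_integral_singleton[OF m2] by simp
  also have "\<dots> = (\<integral>\<^sup>+x\<in>{0..1}. \<integral>\<^sup>+y\<in>{0..1}. \<integral>\<^sup>+z\<in>{0..1}. f x y z \<partial>lborel \<partial>lborel \<partial>lborel)"
  proof -
    have [measurable]: "(\<lambda>(x, y, z). f x y z) \<in> borel_measurable (lborel \<Otimes>\<^sub>M lborel \<Otimes>\<^sub>M lborel)"
      by (fact f)
    have "(\<lambda>w. (fst (fst w), snd (fst w), snd w)) \<in> (lborel \<Otimes>\<^sub>M lborel) \<Otimes>\<^sub>M lborel \<rightarrow>\<^sub>M lborel \<Otimes>\<^sub>M lborel \<Otimes>\<^sub>M lborel"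
      by measurable
    from measurable_compose[OF this f]
    have [measurable]: "(\<lambda>w. f (fst (fst w)) (snd (fst w)) (snd w)) \<in> borel_measurable ((lborel \<Otimes>\<^sub>M lborel) \<Otimes>\<^sub>M lborel)"
      by simp
    have "(\<integral>\<^sup>+z. f x y z \<partial>?U) = (\<integral>\<^sup>+z\<in>{0..1}. f x y z \<partial>lborel)" for x y
      by (rule uniform) measurable
    moreover have "(\<integral>\<^sup>+y. (\<integral>\<^sup>+z\<in>{0..1}. f x y z \<partial>lborel) \<partial>?U) =
        (\<integral>\<^sup>+y\<in>{0..1}. \<integral>\<^sup>+z\<in>{0..1}. f x y z \<partial>lborel \<partial>lborel)" for x
      by (rule uniform) measurable
    moreover have "(\<integral>\<^sup>+x. (\<integral>\<^sup>+y\<in>{0..1}. \<integral>\<^sup>+z\<in>{0..1}. f x y z \<partial>lborel \<partial>lborel) \<partial>?U) =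
        (\<integral>\<^sup>+x\<in>{0..1}. \<integral>\<^sup>+y\<in>{0..1}. \<integral>\<^sup>+z\<in>{0..1}. f x y z \<partial>lborel \<partial>lborel \<partial>lborel)"
      by (rule uniform) measurable
    ultimately show ?thesis by simp
  qed
  finally show ?thesis .
qed

lemma borel_measurable_break_space_component:
  "i < 3 \<Longrightarrow> (\<lambda>x. x i) \<in> borel_measurable break_space"
  unfolding break_space_def by measurable

lemma emeasure_triangle_then_none:
  "emeasure break_space {x \<in> space break_space. triangle_then_none (x 0) (x 1) (x 2)} =
     (\<integral>\<^sup>+x\<in>{0..1}. \<integral>\<^sup>+y\<in>{0..1}. \<integral>\<^sup>+z\<in>{0..1}. of_bool (triangle_then_none x y z) \<partial>lborel \<partial>lborel \<partial>lborel)"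
proof -
  let ?E = "{x \<in> space break_space. triangle_then_none (x 0) (x 1) (x 2)}"
  have "?E \<in> sets break_space"
    using pred_triangle_then_none[OF borel_measurable_break_space_component[of 0]
        borel_measurable_break_space_component[of 1] borel_measurable_break_space_component[of 2]]
    by (simp add: pred_def)
  then have "emeasure break_space ?E = (\<integral>\<^sup>+x. indicator ?E x \<partial>break_space)"
    by (rule nn_integral_indicator[symmetric])
  also have "\<dots> = (\<integral>\<^sup>+x. of_bool (triangle_then_none (x 0) (x 1) (x 2)) \<partial>break_space)"
    by (intro nn_integral_cong) (simp add: indicator_def)
  also have "\<dots> = (\<integral>\<^sup>+x\<in>{0..1}. \<integral>\<^sup>+y\<in>{0..1}. \<integral>\<^sup>+z\<in>{0..1}.
      of_bool (triangle_then_none x y z) \<partial>lborel \<partial>lborel \<partial>lborel)"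
    by (rule nn_integral_break_space) measurable
  finally show ?thesis .
qed

lemma nn_integral_unit_cube_triangle_then_none:
  "(\<integral>\<^sup>+x\<in>{0..1}. \<integral>\<^sup>+y\<in>{0..1}. \<integral>\<^sup>+z\<in>{0..1}. of_bool (triangle_then_none x y z) \<partial>lborel \<partial>lborel \<partial>lborel) =
     2 * (\<integral>\<^sup>+a. \<integral>\<^sup>+b. no_triangle_measure a b \<partial>lborel \<partial>lborel)"
proof (rule nn_integral_unit_square_symmetric)
  show "(\<lambda>(x, y). \<integral>\<^sup>+z\<in>{0..1}. of_bool (triangle_then_none x y z) \<partial>lborel)
      \<in> borel_measurable (lborel \<Otimes>\<^sub>M lborel)"
    by measurable
  show "(\<lambda>(a, b). no_triangle_measure a b) \<in> borel_measurable (lborel \<Otimes>\<^sub>M lborel)"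
    by measurable
  show "(\<integral>\<^sup>+z\<in>{0..1}. of_bool (triangle_then_none x y z) \<partial>lborel) =
      (\<integral>\<^sup>+z\<in>{0..1}. of_bool (triangle_then_none y x z) \<partial>lborel)" for x y
    by (simp add: triangle_then_none_swap)
  show "(\<integral>\<^sup>+z\<in>{0..1}. of_bool (triangle_then_none x y z) \<partial>lborel) = no_triangle_measure x (y - x)"
    if "0 \<le> x" "x < y" "y \<le> 1" for x y
    using that by (rule nn_integral_third_break)
  show "0 \<le> a \<and> 0 < b \<and> a + b \<le> 1" if "no_triangle_measure a b \<noteq> 0" for a b
    using that no_triangle_measure_eq_0[of a b] by linarith
qed

theorem mainTheorem9:
  shows "measure break_space
           {x \<in> space break_space.
              some_triangle (seg_lengths [x 0, x 1]) \<and>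
              \<not> some_triangle (seg_lengths [x 0, x 1, x 2])} = 3 / 112"
proof -
  have "emeasure break_space {x \<in> space break_space. triangle_then_none (x 0) (x 1) (x 2)} =
      2 * (\<integral>\<^sup>+a. \<integral>\<^sup>+b. no_triangle_measure a b \<partial>lborel \<partial>lborel)"
    unfolding emeasure_triangle_then_none nn_integral_unit_cube_triangle_then_none ..
  also have "\<dots> = ennreal (3 / 112)"
    unfolding nn_integral_no_triangle_measure using ennreal_mult[of 2 "3 / 224"] by simp
  finally show ?thesis
    by (simp add: measure_def triangle_then_none_def)
qed

end
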